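(* Let $\mathcal{G}$ be an $N$-player continuous concave game with pseudo-gradient $U$ (setting in the context). For each player $p$ let $\vartheta^p$ satisfy the regularizer assumption (with strong convexity constant $\rho>0$), let $\epsilon>0$, let $C_\epsilon=(C^p_\epsilon)_{p}$ be the induced mirror map, and let $h(x)=\sum_{p}\vartheta^p(x^p)$ with Bregman divergence $D_h$. Suppose $\mathcal{G}$ is $\mu$-relatively hypo-monotone with respect to $h$, and suppose $\overline x=(\overline x^p)_p\in\mathrm{relint}(\Omega)$ is the unique interior perturbed Nash equilibrium, i.e. $\overline x=C_\epsilon(U(\overline x))$. Let $\gamma>0$, $\epsilon>\mu$, $z(0)\in\mathbb{R}^n$, and let $z(t)$ solve the discounted mirror descent dynamics $\dot z=\gamma(-z+U(x))$, $x=C_\epsilon(z)$, with $x(t)=C_\epsilon(z(t))$ and $x_0=x(0)=C_\epsilon(z(0))$. Then $x(t)\to\overline x$ with $$D_h(\overline x,x(t))\le e^{-\gamma(\epsilon-\mu)\epsilon^{-1}t}D_h(\overline x,x_0),$$ and $$\|\overline x-x(t)\|_2^2\le 2\rho^{-1}e^{-\gamma(\epsilon-\mu)\epsilon^{-1}t}D_h(\overline x,x_0).$$ In particular, for $\mu=0$ (the null monotone case, $(U(x)-U(x'))^\top(x-x')=0$ for all $x,x'$), $\|\overline x-x(t)\|_2^2\le 2\rho^{-1}e^{-\gamma t}D_h(\overline x,x_0)$.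
   Context: Game setting: players $\mathcal{N}=\{1,\dots,N\}$; strategy sets $\Omega^p\subseteq\mathbb{R}^{n_p}$ nonempty, compact, convex; $\Omega=\prod_p\Omega^p\subseteq\mathbb{R}^n$; payoffs $\mathcal{U}^p:\Omega\to\mathbb{R}$ jointly continuous, concave and continuously differentiable in $x^p$ for each fixed $x^{-p}$; pseudo-gradient $U(x)=(\nabla_{x^p}\mathcal{U}^p(x))_p$, assumed $L$-Lipschitz on $\Omega$. Regularizer assumption: $\vartheta^p:\mathbb{R}^{n_p}\to\mathbb{R}\cup\{\infty\}$ closed, proper, $\rho$-strongly convex (Euclidean norm), $\mathrm{dom}(\vartheta^p)=\Omega^p$. Mirror map: $C^p_\epsilon(z^p)=\arg\max_{y^p\in\Omega^p}[{y^p}^\top z^p-\epsilon\vartheta^p(y^p)]$. A perturbed NE $\overline x=C_\epsilon(U(\overline x))$ is a Nash equilibrium of the game with payoffs $\mathcal{U}^p-\epsilon\vartheta^p$. Bregman divergence $D_h(x,y)=h(x)-h(y)-\nabla h(y)^\top(x-y)$; $\mathrm{dom}(\partial h)=\{x:\partial h(x)\ne\varnothing\}$. $\mathcal{G}$ is $\mu$-relatively hypo-monotone w.r.t. $h$ if $(U(x)-U(x'))^\top(x-x')\le\mu(D_h(x,x')+D_h(x',x))$ for all $x,x'\in\mathrm{dom}(\partial h)$. *)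

theory Defs
  imports "HOL-Analysis.Analysis"
begin

text \<open>Players are a finite type 'p; blk i is the player owning coordinate i.
  Player p's space R^{n_p} is identified with the coordinate subspace
  block_space blk p; x^p is proj_blk blk p x.\<close>

definition block_space :: "('c::finite \<Rightarrow> 'p) \<Rightarrow> 'p \<Rightarrow> (real^'c) set" where
  "block_space blk p = {v. \<forall>i. blk i \<noteq> p \<longrightarrow> v $ i = 0}"

definition proj_blk :: "('c::finite \<Rightarrow> 'p) \<Rightarrow> 'p \<Rightarrow> real^'c \<Rightarrow> real^'c" where
  "proj_blk blk p x = (\<chi> i. if blk i = p then x $ i else 0)"

definition upd_blk :: "('c::finite \<Rightarrow> 'p) \<Rightarrow> real^'c \<Rightarrow> 'p \<Rightarrow> real^'c \<Rightarrow> real^'c" where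
  "upd_blk blk x p y = (\<chi> i. if blk i = p then y $ i else x $ i)"

definition joint_set :: "('c::finite \<Rightarrow> 'p) \<Rightarrow> ('p \<Rightarrow> (real^'c) set) \<Rightarrow> (real^'c) set" where
  "joint_set blk \<Omega>p = {x. \<forall>p. proj_blk blk p x \<in> \<Omega>p p}"

definition concave_game ::
  "('c::finite \<Rightarrow> 'p) \<Rightarrow> ('p \<Rightarrow> (real^'c) set) \<Rightarrow> ('p \<Rightarrow> real^'c \<Rightarrow> real)
    \<Rightarrow> (real^'c \<Rightarrow> real^'c) \<Rightarrow> real \<Rightarrow> bool" where
  "concave_game blk \<Omega>p Upay U L \<longleftrightarrow>
     (\<forall>p. \<Omega>p p \<subseteq> block_space blk p \<and> \<Omega>p p \<noteq> {} \<and> compact (\<Omega>p p) \<and> convex (\<Omega>p p)) \<and>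
     (\<forall>p. continuous_on (joint_set blk \<Omega>p) (Upay p)) \<and>
     (\<forall>p. \<forall>x\<in>joint_set blk \<Omega>p. concave_on (\<Omega>p p) (\<lambda>y. Upay p (upd_blk blk x p y))) \<and>
     (\<forall>p. \<forall>x\<in>joint_set blk \<Omega>p. \<forall>y\<in>\<Omega>p p.
        ((\<lambda>y'. Upay p (upd_blk blk x p y')) has_derivative
           (\<lambda>v. proj_blk blk p (U (upd_blk blk x p y)) \<bullet> v)) (at y within \<Omega>p p)) \<and>
     L-lipschitz_on (joint_set blk \<Omega>p) U"

text \<open>Regularizer assumption. theta is real valued on its domain Omega^p (the extended
  function is +infinity outside Omega^p); closedness = closed sublevel sets on Omega^p;
  rho-strong convexity w.r.t. the Euclidean norm.\<close>
definition regularizer :: "(real^'c::finite) set \<Rightarrow> (real^'c \<Rightarrow> real) \<Rightarrow> real \<Rightarrow> bool" where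
  "regularizer \<Omega> \<theta> \<rho> \<longleftrightarrow>
     (\<forall>c. closed {y\<in>\<Omega>. \<theta> y \<le> c}) \<and>
     (\<forall>x\<in>\<Omega>. \<forall>y\<in>\<Omega>. \<forall>s::real. 0 \<le> s \<and> s \<le> 1 \<longrightarrow>
        \<theta> (s *\<^sub>R x + (1 - s) *\<^sub>R y)
          \<le> s * \<theta> x + (1 - s) * \<theta> y - \<rho> / 2 * s * (1 - s) * (norm (x - y))\<^sup>2)"

definition mirror_p :: "(real^'c::finite) set \<Rightarrow> (real^'c \<Rightarrow> real) \<Rightarrow> real \<Rightarrow> real^'c \<Rightarrow> real^'c" where
  "mirror_p \<Omega> \<theta> \<epsilon> zp =
     (THE y. y \<in> \<Omega> \<and> (\<forall>y'\<in>\<Omega>. y' \<bullet> zp - \<epsilon> * \<theta> y' \<le> y \<bullet> zp - \<epsilon> * \<theta> y))"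

definition mirror :: "('c::finite \<Rightarrow> 'p) \<Rightarrow> ('p \<Rightarrow> (real^'c) set) \<Rightarrow> ('p \<Rightarrow> real^'c \<Rightarrow> real)
    \<Rightarrow> real \<Rightarrow> real^'c \<Rightarrow> real^'c" where
  "mirror blk \<Omega>p \<theta> \<epsilon> z =
     (\<chi> i. mirror_p (\<Omega>p (blk i)) (\<theta> (blk i)) \<epsilon> (proj_blk blk (blk i) z) $ i)"

definition hsum :: "('c::finite \<Rightarrow> 'p::finite) \<Rightarrow> ('p \<Rightarrow> real^'c \<Rightarrow> real) \<Rightarrow> real^'c \<Rightarrow> real" where
  "hsum blk \<theta> x = (\<Sum>p\<in>UNIV. \<theta> p (proj_blk blk p x))"

text \<open>Subdifferential of the extended function (h on Omega, +infinity outside).\<close>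
definition subgrad :: "(real^'c::finite) set \<Rightarrow> (real^'c \<Rightarrow> real) \<Rightarrow> real^'c \<Rightarrow> (real^'c) set" where
  "subgrad \<Omega> h y = {g. y \<in> \<Omega> \<and> (\<forall>x\<in>\<Omega>. h y + g \<bullet> (x - y) \<le> h x)}"

definition bregman :: "(real^'c::finite \<Rightarrow> real) \<Rightarrow> real^'c \<Rightarrow> real^'c \<Rightarrow> real^'c \<Rightarrow> real" where
  "bregman h x y g = h x - h y - g \<bullet> (x - y)"

definition rel_hypo_monotone :: "(real^'c::finite) set \<Rightarrow> (real^'c \<Rightarrow> real) \<Rightarrow> (real^'c \<Rightarrow> real^'c) \<Rightarrow> real \<Rightarrow> bool" where
  "rel_hypo_monotone \<Omega> h U \<mu> \<longleftrightarrow>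
     (\<forall>x x' g g'. g \<in> subgrad \<Omega> h x \<longrightarrow> g' \<in> subgrad \<Omega> h x' \<longrightarrow>
        (U x - U x') \<bullet> (x - x') \<le> \<mu> * (bregman h x x' g' + bregman h x' x g))"

end

theory Submission
  imports Defs
begin

(* With x = C(z), the Bregman divergence V = D_h(xbar, x), taken with the subgradient z/eps of h
  at x, is a Lyapunov function. The value function of the regularised maximisation defining C
  has gradient C, so along the flow V' = (gamma/eps) (x - xbar) . (U x - z). Splitting
  U x - z = (U x - U xbar) + (U xbar - z) and using xbar = C(U xbar), the second part contributes
  -eps times the symmetrised Bregman divergence and the first at most mu times it, whence
  V' <= -gamma (eps - mu)/eps V and V decays exponentially. Strong convexity of h gives
  D_h(xbar, x) >= rho/2 |xbar - x|^2. *)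

definition strongly_convex_on :: "'a::real_normed_vector set \<Rightarrow> ('a \<Rightarrow> real) \<Rightarrow> real \<Rightarrow> bool" where
  "strongly_convex_on K h \<rho> \<longleftrightarrow>
     (\<forall>x\<in>K. \<forall>y\<in>K. \<forall>s. 0 \<le> s \<and> s \<le> 1 \<longrightarrow>
        h (s *\<^sub>R x + (1 - s) *\<^sub>R y) \<le> s * h x + (1 - s) * h y - \<rho> / 2 * s * (1 - s) * (norm (x - y))\<^sup>2)"

lemma strongly_convex_onD:
  "strongly_convex_on K h \<rho> \<Longrightarrow> x \<in> K \<Longrightarrow> y \<in> K \<Longrightarrow> 0 \<le> s \<Longrightarrow> s \<le> 1 \<Longrightarrow>
    h (s *\<^sub>R x + (1 - s) *\<^sub>R y) \<le> s * h x + (1 - s) * h y - \<rho> / 2 * s * (1 - s) * (norm (x - y))\<^sup>2"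
  unfolding strongly_convex_on_def by blast

lemma regularizer_iff:
  "regularizer \<Omega> \<theta> \<rho> \<longleftrightarrow> (\<forall>c. closed {y\<in>\<Omega>. \<theta> y \<le> c}) \<and> strongly_convex_on \<Omega> \<theta> \<rho>"
  unfolding regularizer_def strongly_convex_on_def by blast

lemma bregman_ge_sq_norm_if_strongly_convex:
  fixes h :: "real^'c::finite \<Rightarrow> real"
  assumes "convex K" and sc: "strongly_convex_on K h \<rho>" and "\<rho> \<ge> 0"
    and g: "g \<in> subgrad K h x" and y: "y \<in> K"
  shows "\<rho> / 2 * (norm (y - x))\<^sup>2 \<le> bregman h y x g"
proof -
  have x: "x \<in> K" using g by (simp add: subgrad_def)
  define a where "a = \<rho> / 2 * (norm (y - x))\<^sup>2"
  have shrink: "a - s * a \<le> bregman h y x g" if s: "0 < s" "s \<le> 1" for s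
  proof -
    define p where "p = s *\<^sub>R y + (1 - s) *\<^sub>R x"
    have "p \<in> K" using \<open>convex K\<close> x y s unfolding p_def by (simp add: convexD)
    then have "h x + g \<bullet> (p - x) \<le> h p" using g by (simp add: subgrad_def)
    moreover have "p - x = s *\<^sub>R (y - x)" by (simp add: p_def algebra_simps)
    moreover have "h p \<le> s * h y + (1 - s) * h x - s * (1 - s) * a"
    proof -
      have "\<rho> / 2 * s * (1 - s) * (norm (y - x))\<^sup>2 = s * (1 - s) * a" by (simp add: a_def)
      then show ?thesis unfolding p_def using strongly_convex_onD[OF sc y x, of s] s by linarith
    qed
    ultimately have "s * (g \<bullet> (y - x)) \<le> s * (h y - h x - (1 - s) * a)"
      by (simp add: algebra_simps)
    then have "g \<bullet> (y - x) \<le> h y - h x - (1 - s) * a"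
      using s by simp
    then show ?thesis by (simp add: bregman_def algebra_simps)
  qed
  have "((\<lambda>s. a - s * a) \<longlongrightarrow> a - 0 * a) (at_right 0)"
    by (intro tendsto_intros)
  moreover have "\<forall>\<^sub>F s in at_right 0. a - s * a \<le> bregman h y x g"
    using eventually_at_right_real[OF zero_less_one] by eventually_elim (auto intro: shrink)
  ultimately show ?thesis unfolding a_def[symmetric] by (auto intro: tendsto_upperbound)
qed

lemma exp_decay_if_deriv_le:
  fixes V D :: "real \<Rightarrow> real"
  assumes deriv: "\<And>s. 0 \<le> s \<Longrightarrow> (V has_real_derivative D s) (at s within {0..})"
    and bound: "\<And>s. 0 \<le> s \<Longrightarrow> D s \<le> - k * V s"
    and "0 \<le> t"
  shows "V t \<le> exp (- k * t) * V 0"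
proof -
  define W where "W s = exp (k * s) * V s" for s
  have dW: "(W has_real_derivative exp (k * s) * (k * V s + D s)) (at s within {0..})"
    if "0 \<le> s" for s
    unfolding W_def by (auto intro!: derivative_eq_intros deriv[OF that] simp: algebra_simps)
  have "W t \<le> W 0"
  proof (rule DERIV_nonpos_imp_decreasing_open[OF \<open>0 \<le> t\<close>])
    fix s assume s: "0 < s" "s < t"
    have "at s within {0..} = at s" using s by (intro at_within_interior) simp
    moreover have "exp (k * s) * (k * V s + D s) \<le> 0"
      using bound[of s] s by (intro mult_nonneg_nonpos) auto
    ultimately show "\<exists>y. DERIV W s :> y \<and> y \<le> 0" using dW[of s] s by auto
  next
    have "continuous_on {0..} W" by (rule DERIV_continuous_on) (use dW in auto)
    then show "continuous_on {0..t} W" by (rule continuous_on_subset) auto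
  qed
  then show ?thesis by (simp add: W_def exp_minus field_simps)
qed

lemma tendsto_if_sq_norm_le_exp_decay:
  fixes f :: "real \<Rightarrow> 'a::real_normed_vector"
  assumes "k > 0" and bound: "\<And>t. 0 \<le> t \<Longrightarrow> (norm (f t - l))\<^sup>2 \<le> c * exp (- k * t)"
  shows "(f \<longlongrightarrow> l) at_top"
proof -
  have "filterlim (\<lambda>t. k * t) at_top at_top"
    using \<open>k > 0\<close> by (intro filterlim_tendsto_pos_mult_at_top[OF tendsto_const _ filterlim_ident])
  then have "filterlim (\<lambda>t. - k * t) at_bot at_top"
    using filterlim_compose[OF filterlim_uminus_at_bot_at_top] by simp
  then have "((\<lambda>t. exp (- k * t)) \<longlongrightarrow> 0) at_top"
    using filterlim_compose[OF exp_at_bot] by (simp add: o_def)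
  then have "((\<lambda>t. sqrt (c * exp (- k * t))) \<longlongrightarrow> sqrt (c * 0)) at_top"
    by (intro tendsto_real_sqrt tendsto_mult_left)
  then have lim: "((\<lambda>t. sqrt (c * exp (- k * t))) \<longlongrightarrow> 0) at_top" by simp
  have "\<forall>\<^sub>F t in at_top. norm (f t - l) \<le> sqrt (c * exp (- k * t))"
    using eventually_ge_at_top[of 0]
  proof eventually_elim
    case (elim t)
    then show ?case using bound[of t] by (intro real_le_rsqrt)
  qed
  then have "((\<lambda>t. f t - l) \<longlongrightarrow> 0) at_top"
    using lim by (rule Lim_null_comparison)
  then show ?thesis by (rule LIM_zero_cancel)
qed

lemma closed_superlevel_inner_minus:
  fixes \<theta> :: "'a::real_inner \<Rightarrow> real"
  assumes "closed \<Omega>" and sublevel: "\<And>c. closed {y\<in>\<Omega>. \<theta> y \<le> c}" and "\<epsilon> > 0"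
  shows "closed {y\<in>\<Omega>. c \<le> y \<bullet> a - \<epsilon> * \<theta> y}"
  unfolding closed_sequential_limits
proof (intro allI impI, elim conjE)
  fix x :: "nat \<Rightarrow> 'a" and l
  assume x: "\<forall>n. x n \<in> {y\<in>\<Omega>. c \<le> y \<bullet> a - \<epsilon> * \<theta> y}" and lim: "x \<longlonglongrightarrow> l"
  have "l \<in> \<Omega>" using \<open>closed \<Omega>\<close> x lim by (metis (no_types, lifting) closed_sequentially mem_Collect_eq)
  show "l \<in> {y\<in>\<Omega>. c \<le> y \<bullet> a - \<epsilon> * \<theta> y}"
  proof (rule ccontr)
    assume "l \<notin> {y\<in>\<Omega>. c \<le> y \<bullet> a - \<epsilon> * \<theta> y}"
    then have gap: "l \<bullet> a - c < \<epsilon> * \<theta> l" using \<open>l \<in> \<Omega>\<close> by simp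
    define d where "d = (\<epsilon> * \<theta> l - (l \<bullet> a - c)) / 2"
    have "d > 0" using gap by (simp add: d_def)
    have "(\<lambda>n. x n \<bullet> a) \<longlonglongrightarrow> l \<bullet> a" by (intro tendsto_intros lim)
    then have "\<forall>\<^sub>F n in sequentially. x n \<bullet> a < l \<bullet> a + d"
      using \<open>d > 0\<close> by (intro order_tendstoD) auto
    then have "\<forall>\<^sub>F n in sequentially. x n \<in> {y\<in>\<Omega>. \<theta> y \<le> \<theta> l - d / \<epsilon>}"
    proof eventually_elim
      case (elim n)
      have "c \<le> x n \<bullet> a - \<epsilon> * \<theta> (x n)" using x by simp
      then have "\<epsilon> * \<theta> (x n) \<le> \<epsilon> * \<theta> l - d"
        using elim by (simp add: d_def field_simps)
      then show ?case using x \<open>\<epsilon> > 0\<close> by (simp add: field_simps)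
    qed
    then have "l \<in> {y\<in>\<Omega>. \<theta> y \<le> \<theta> l - d / \<epsilon>}"
      by (rule Lim_in_closed_set[OF sublevel _ _ lim]) simp
    then show False using \<open>d > 0\<close> \<open>\<epsilon> > 0\<close> by (simp add: field_simps)
  qed
qed

lemma compact_attains_sup_if_closed_superlevels:
  fixes f :: "'a::topological_space \<Rightarrow> 'b::linorder"
  assumes "compact \<Omega>" and "\<Omega> \<noteq> {}" and superlevel: "\<And>c. closed {y\<in>\<Omega>. c \<le> f y}"
  shows "\<exists>y\<in>\<Omega>. \<forall>y'\<in>\<Omega>. f y' \<le> f y"
proof -
  have "\<Omega> \<inter> (\<Inter>y'\<in>\<Omega>. {y\<in>\<Omega>. f y' \<le> f y}) \<noteq> {}"
  proof (rule compact_imp_fip_image[OF \<open>compact \<Omega>\<close> superlevel])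
    fix F assume "finite F" and "F \<subseteq> \<Omega>"
    show "\<Omega> \<inter> (\<Inter>y'\<in>F. {y\<in>\<Omega>. f y' \<le> f y}) \<noteq> {}"
    proof (cases "F = {}")
      case False
      have "Max (f ` F) \<in> f ` F" using \<open>finite F\<close> False by (intro Max_in) auto
      then obtain y where "y \<in> F" "f y = Max (f ` F)" by auto
      then have "y \<in> \<Omega> \<inter> (\<Inter>y'\<in>F. {y\<in>\<Omega>. f y' \<le> f y})"
        using \<open>finite F\<close> \<open>F \<subseteq> \<Omega>\<close> by auto
      then show ?thesis by blast
    qed (use \<open>\<Omega> \<noteq> {}\<close> in simp)
  qed
  then show ?thesis by blast
qed

lemma maximizer_unique_if_strongly_convex:
  fixes \<theta> :: "'a::real_inner \<Rightarrow> real"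
  assumes "convex \<Omega>" and sc: "strongly_convex_on \<Omega> \<theta> \<rho>" and "\<rho> > 0" and "\<epsilon> > 0"
    and y1: "y1 \<in> \<Omega>" "\<forall>y\<in>\<Omega>. y \<bullet> a - \<epsilon> * \<theta> y \<le> y1 \<bullet> a - \<epsilon> * \<theta> y1"
    and y2: "y2 \<in> \<Omega>" "\<forall>y\<in>\<Omega>. y \<bullet> a - \<epsilon> * \<theta> y \<le> y2 \<bullet> a - \<epsilon> * \<theta> y2"
  shows "y1 = y2"
proof -
  define m where "m = (1/2) *\<^sub>R y1 + (1/2) *\<^sub>R y2"
  have "m \<in> \<Omega>" unfolding m_def using \<open>convex \<Omega>\<close> y1 y2 by (intro convexD) auto
  have "\<theta> m \<le> (\<theta> y1 + \<theta> y2) / 2 - \<rho> / 8 * (norm (y1 - y2))\<^sup>2"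
    using strongly_convex_onD[OF sc y1(1) y2(1), of "1/2"] by (simp add: m_def add_divide_distrib)
  then have "\<epsilon> * \<theta> m \<le> \<epsilon> * ((\<theta> y1 + \<theta> y2) / 2 - \<rho> / 8 * (norm (y1 - y2))\<^sup>2)"
    by (rule mult_left_mono) (use \<open>\<epsilon> > 0\<close> in simp)
  also have "\<dots> = (\<epsilon> * \<theta> y1 + \<epsilon> * \<theta> y2) / 2 - \<epsilon> * (\<rho> / 8 * (norm (y1 - y2))\<^sup>2)"
    by (simp add: algebra_simps)
  finally have "\<epsilon> * \<theta> m \<le> (\<epsilon> * \<theta> y1 + \<epsilon> * \<theta> y2) / 2 - \<epsilon> * (\<rho> / 8 * (norm (y1 - y2))\<^sup>2)" .
  moreover have "m \<bullet> a - \<epsilon> * \<theta> m \<le> y1 \<bullet> a - \<epsilon> * \<theta> y1" using y1 \<open>m \<in> \<Omega>\<close> by blast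
  moreover have "m \<bullet> a = (y1 \<bullet> a + y2 \<bullet> a) / 2" by (simp add: m_def inner_add_left)
  moreover have "y1 \<bullet> a - \<epsilon> * \<theta> y1 = y2 \<bullet> a - \<epsilon> * \<theta> y2"
    using y1(2)[rule_format, OF y2(1)] y2(2)[rule_format, OF y1(1)] by argo
  ultimately have "\<epsilon> * (\<rho> / 8 * (norm (y1 - y2))\<^sup>2) \<le> 0"
    by argo
  then have "(norm (y1 - y2))\<^sup>2 \<le> 0"
    using \<open>\<rho> > 0\<close> \<open>\<epsilon> > 0\<close> by (simp add: mult_le_0_iff)
  then show ?thesis by simp
qed

lemma mirror_p_maximizes:
  fixes \<theta> :: "real^'c::finite \<Rightarrow> real"
  assumes "compact \<Omega>" "convex \<Omega>" "\<Omega> \<noteq> {}" and reg: "regularizer \<Omega> \<theta> \<rho>" and "\<rho> > 0" "\<epsilon> > 0"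
  shows "mirror_p \<Omega> \<theta> \<epsilon> a \<in> \<Omega> \<and>
    (\<forall>y\<in>\<Omega>. y \<bullet> a - \<epsilon> * \<theta> y \<le> mirror_p \<Omega> \<theta> \<epsilon> a \<bullet> a - \<epsilon> * \<theta> (mirror_p \<Omega> \<theta> \<epsilon> a))"
proof -
  have superlevel: "closed {y\<in>\<Omega>. c \<le> y \<bullet> a - \<epsilon> * \<theta> y}" for c
    using reg \<open>compact \<Omega>\<close> \<open>\<epsilon> > 0\<close>
    by (intro closed_superlevel_inner_minus) (auto simp: regularizer_iff compact_imp_closed)
  then obtain y where "y \<in> \<Omega>" "\<forall>y'\<in>\<Omega>. y' \<bullet> a - \<epsilon> * \<theta> y' \<le> y \<bullet> a - \<epsilon> * \<theta> y"
    using compact_attains_sup_if_closed_superlevels[OF \<open>compact \<Omega>\<close> \<open>\<Omega> \<noteq> {}\<close> superlevel] by blast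
  moreover note maximizer_unique_if_strongly_convex[OF \<open>convex \<Omega>\<close> _ \<open>\<rho> > 0\<close> \<open>\<epsilon> > 0\<close>]
  ultimately have "\<exists>!y. y \<in> \<Omega> \<and> (\<forall>y'\<in>\<Omega>. y' \<bullet> a - \<epsilon> * \<theta> y' \<le> y \<bullet> a - \<epsilon> * \<theta> y)"
    using reg unfolding regularizer_iff by blast
  then show ?thesis unfolding mirror_p_def by (rule theI')
qed

lemma inner_eq_sum_proj_blk:
  fixes blk :: "'c::finite \<Rightarrow> 'p::finite"
  shows "x \<bullet> y = (\<Sum>p\<in>UNIV. proj_blk blk p x \<bullet> proj_blk blk p y)"
proof -
  have "(\<Sum>p\<in>UNIV. proj_blk blk p x \<bullet> proj_blk blk p y)
      = (\<Sum>p\<in>UNIV. \<Sum>i\<in>UNIV. if blk i = p then x $ i * y $ i else 0)"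
    by (simp add: proj_blk_def inner_vec_def if_distrib cong: if_cong)
  also have "\<dots> = (\<Sum>i\<in>UNIV. \<Sum>p\<in>UNIV. if blk i = p then x $ i * y $ i else 0)"
    by (rule sum.swap)
  also have "\<dots> = x \<bullet> y" by (simp add: inner_vec_def)
  finally show ?thesis by simp
qed

lemma proj_blk_add_scaleR:
  "proj_blk blk p (s *\<^sub>R x + t *\<^sub>R y) = s *\<^sub>R proj_blk blk p x + t *\<^sub>R proj_blk blk p y"
  by (simp add: proj_blk_def vec_eq_iff)

lemma proj_blk_diff: "proj_blk blk p (x - y) = proj_blk blk p x - proj_blk blk p y"
  by (simp add: proj_blk_def vec_eq_iff)

lemma proj_blk_mirror:
  assumes "\<Omega>p p \<subseteq> block_space blk p" and "\<And>a. mirror_p (\<Omega>p p) (\<theta> p) \<epsilon> a \<in> \<Omega>p p"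
  shows "proj_blk blk p (mirror blk \<Omega>p \<theta> \<epsilon> z) = mirror_p (\<Omega>p p) (\<theta> p) \<epsilon> (proj_blk blk p z)"
proof -
  have "mirror_p (\<Omega>p p) (\<theta> p) \<epsilon> (proj_blk blk p z) $ i = 0" if "blk i \<noteq> p" for i
    using assms that unfolding block_space_def by blast
  then show ?thesis
    unfolding proj_blk_def mirror_def by (auto simp: vec_eq_iff)
qed

lemma convex_joint_set: "(\<And>p. convex (\<Omega>p p)) \<Longrightarrow> convex (joint_set blk \<Omega>p)"
  unfolding convex_def joint_set_def by (auto simp: proj_blk_add_scaleR intro!: convexD)

lemma strongly_convex_on_hsum:
  fixes blk :: "'c::finite \<Rightarrow> 'p::finite"
  assumes sc: "\<And>p. strongly_convex_on (\<Omega>p p) (\<theta> p) \<rho>"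
  shows "strongly_convex_on (joint_set blk \<Omega>p) (hsum blk \<theta>) \<rho>"
  unfolding strongly_convex_on_def
proof (intro ballI allI impI, elim conjE)
  fix x y and s :: real
  assume x: "x \<in> joint_set blk \<Omega>p" and y: "y \<in> joint_set blk \<Omega>p"
    and s: "0 \<le> s" "s \<le> 1"
  let ?x = "\<lambda>p. proj_blk blk p x" and ?y = "\<lambda>p. proj_blk blk p y"
  have "(norm (x - y))\<^sup>2 = (\<Sum>p\<in>UNIV. (norm (?x p - ?y p))\<^sup>2)"
    by (simp add: power2_norm_eq_inner inner_eq_sum_proj_blk[of "x - y" "x - y" blk] proj_blk_diff)
  moreover have "hsum blk \<theta> (s *\<^sub>R x + (1 - s) *\<^sub>R y) = (\<Sum>p\<in>UNIV. \<theta> p (s *\<^sub>R ?x p + (1 - s) *\<^sub>R ?y p))"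
    by (simp add: hsum_def proj_blk_add_scaleR)
  moreover have "\<dots> \<le> (\<Sum>p\<in>UNIV. s * \<theta> p (?x p) + (1 - s) * \<theta> p (?y p)
      - \<rho> / 2 * s * (1 - s) * (norm (?x p - ?y p))\<^sup>2)"
    using x y s by (intro sum_mono strongly_convex_onD[OF sc]) (auto simp: joint_set_def)
  ultimately show "hsum blk \<theta> (s *\<^sub>R x + (1 - s) *\<^sub>R y)
      \<le> s * hsum blk \<theta> x + (1 - s) * hsum blk \<theta> y - \<rho> / 2 * s * (1 - s) * (norm (x - y))\<^sup>2"
    by (simp add: hsum_def sum_subtractf sum.distrib sum_distrib_left)
qed

lemma mirror_maximizes_hsum:
  fixes blk :: "'c::finite \<Rightarrow> 'p::finite"
  assumes blocks: "\<And>p. \<Omega>p p \<subseteq> block_space blk p"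
    and mirror_p_in: "\<And>p a. mirror_p (\<Omega>p p) (\<theta> p) \<epsilon> a \<in> \<Omega>p p"
    and mirror_p_max: "\<And>p a y. y \<in> \<Omega>p p \<Longrightarrow>
      y \<bullet> a - \<epsilon> * \<theta> p y \<le> mirror_p (\<Omega>p p) (\<theta> p) \<epsilon> a \<bullet> a - \<epsilon> * \<theta> p (mirror_p (\<Omega>p p) (\<theta> p) \<epsilon> a)"
  shows "mirror blk \<Omega>p \<theta> \<epsilon> z \<in> joint_set blk \<Omega>p"
    and "y \<in> joint_set blk \<Omega>p \<Longrightarrow> y \<bullet> z - \<epsilon> * hsum blk \<theta> y
      \<le> mirror blk \<Omega>p \<theta> \<epsilon> z \<bullet> z - \<epsilon> * hsum blk \<theta> (mirror blk \<Omega>p \<theta> \<epsilon> z)"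
proof -
  let ?M = "\<lambda>p. mirror_p (\<Omega>p p) (\<theta> p) \<epsilon> (proj_blk blk p z)"
  have proj: "proj_blk blk p (mirror blk \<Omega>p \<theta> \<epsilon> z) = ?M p" for p
    using blocks mirror_p_in by (rule proj_blk_mirror)
  then show "mirror blk \<Omega>p \<theta> \<epsilon> z \<in> joint_set blk \<Omega>p"
    by (simp add: joint_set_def mirror_p_in)
  assume "y \<in> joint_set blk \<Omega>p"
  then have "y \<bullet> z - \<epsilon> * hsum blk \<theta> y
      = (\<Sum>p\<in>UNIV. proj_blk blk p y \<bullet> proj_blk blk p z - \<epsilon> * \<theta> p (proj_blk blk p y))"
    by (simp add: inner_eq_sum_proj_blk[of y z blk] hsum_def sum_subtractf sum_distrib_left)
  also have "\<dots> \<le> (\<Sum>p\<in>UNIV. ?M p \<bullet> proj_blk blk p z - \<epsilon> * \<theta> p (?M p))"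
    using \<open>y \<in> joint_set blk \<Omega>p\<close> by (intro sum_mono mirror_p_max) (simp add: joint_set_def)
  also have "\<dots> = mirror blk \<Omega>p \<theta> \<epsilon> z \<bullet> z - \<epsilon> * hsum blk \<theta> (mirror blk \<Omega>p \<theta> \<epsilon> z)"
    by (simp add: inner_eq_sum_proj_blk[of _ z blk] hsum_def sum_subtractf sum_distrib_left proj)
  finally show "y \<bullet> z - \<epsilon> * hsum blk \<theta> y
      \<le> mirror blk \<Omega>p \<theta> \<epsilon> z \<bullet> z - \<epsilon> * hsum blk \<theta> (mirror blk \<Omega>p \<theta> \<epsilon> z)" .
qed

locale regularized_mirror_map =
  fixes K :: "(real^'c::finite) set" and h :: "real^'c \<Rightarrow> real" and \<rho> \<epsilon> :: real
    and C :: "real^'c \<Rightarrow> real^'c"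
  assumes convex: "convex K"
    and strongly_convex: "strongly_convex_on K h \<rho>"
    and rho_pos: "\<rho> > 0"
    and eps_pos: "\<epsilon> > 0"
    and mirror_in: "C z \<in> K"
    and mirror_max: "y \<in> K \<Longrightarrow> y \<bullet> z - \<epsilon> * h y \<le> C z \<bullet> z - \<epsilon> * h (C z)"
begin

lemma subgrad_mirror: "(1 / \<epsilon>) *\<^sub>R z \<in> subgrad K h (C z)"
  unfolding subgrad_def
proof (intro CollectI conjI ballI)
  show "C z \<in> K" by (rule mirror_in)
  fix y assume "y \<in> K"
  then have "y \<bullet> z - C z \<bullet> z \<le> \<epsilon> * (h y - h (C z))"
    using mirror_max[of y z] by (simp add: algebra_simps)
  then have "(y \<bullet> z - C z \<bullet> z) / \<epsilon> \<le> h y - h (C z)"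
    using eps_pos by (simp add: divide_le_eq mult.commute)
  then show "h (C z) + ((1 / \<epsilon>) *\<^sub>R z) \<bullet> (y - C z) \<le> h y"
    by (simp add: inner_diff_right inner_commute diff_divide_distrib)
qed

lemma bregman_mirror_ge_sq_norm:
  "y \<in> K \<Longrightarrow> \<rho> / 2 * (norm (y - C z))\<^sup>2 \<le> bregman h y (C z) ((1 / \<epsilon>) *\<^sub>R z)"
  using bregman_ge_sq_norm_if_strongly_convex[OF convex strongly_convex _ subgrad_mirror] rho_pos
  by simp

lemma mirror_lipschitz: "norm (C z - C w) \<le> norm (z - w) / (\<epsilon> * \<rho>)"
proof -
  define n where "n = norm (C z - C w)"
  have "\<rho> / 2 * n\<^sup>2 + \<rho> / 2 * n\<^sup>2
      \<le> bregman h (C w) (C z) ((1 / \<epsilon>) *\<^sub>R z) + bregman h (C z) (C w) ((1 / \<epsilon>) *\<^sub>R w)"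
    using bregman_mirror_ge_sq_norm[OF mirror_in, of w z] bregman_mirror_ge_sq_norm[OF mirror_in, of z w]
    by (simp add: n_def norm_minus_commute)
  also have "\<dots> = ((z - w) \<bullet> (C z - C w)) / \<epsilon>"
    using eps_pos unfolding bregman_def
    by (simp add: inner_diff_left inner_diff_right inner_commute diff_divide_distrib add_divide_distrib)
  also have "\<dots> \<le> norm (z - w) * n / \<epsilon>"
    unfolding n_def using eps_pos by (intro divide_right_mono norm_cauchy_schwarz) auto
  finally have "(\<epsilon> * \<rho> * n) * n \<le> norm (z - w) * n"
    using eps_pos by (simp add: field_simps power2_eq_square)
  then have "\<epsilon> * \<rho> * n \<le> norm (z - w)"
    by (cases "n = 0") (auto simp: n_def)
  then show ?thesis using eps_pos rho_pos by (simp add: n_def field_simps)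
qed

(* Danskin: the value of the maximisation defining C is squeezed between the linearisations
  with slopes C z and C w, and C is Lipschitz. *)
lemma has_derivative_mirror_value:
  "((\<lambda>w. C w \<bullet> w - \<epsilon> * h (C w)) has_derivative (\<lambda>v. C z \<bullet> v)) (at z)"
proof -
  define \<phi> where "\<phi> w = C w \<bullet> w - \<epsilon> * h (C w)" for w
  define r where "r w = \<phi> w - \<phi> z - C z \<bullet> (w - z)" for w
  have r_bound: "\<bar>r w\<bar> \<le> norm (w - z) * (norm (w - z) / (\<epsilon> * \<rho>))" for w
  proof -
    have "0 \<le> r w"
      using mirror_max[OF mirror_in, of z w] by (simp add: r_def \<phi>_def inner_diff_right inner_commute)
    moreover have "r w \<le> (C w - C z) \<bullet> (w - z)"
      using mirror_max[OF mirror_in, of w z]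
      by (simp add: r_def \<phi>_def inner_diff_right inner_diff_left inner_commute)
    moreover have "(C w - C z) \<bullet> (w - z) \<le> norm (C w - C z) * norm (w - z)"
      by (rule norm_cauchy_schwarz)
    moreover have "norm (C w - C z) * norm (w - z) \<le> norm (w - z) / (\<epsilon> * \<rho>) * norm (w - z)"
      using mirror_lipschitz[of w z] by (rule mult_right_mono) simp
    ultimately show ?thesis by (simp add: mult.commute)
  qed
  have "((\<lambda>w. norm (w - z) / (\<epsilon> * \<rho>)) \<longlongrightarrow> norm (z - z) / (\<epsilon> * \<rho>)) (at z)"
    using eps_pos rho_pos by (intro tendsto_intros) auto
  then have lim: "((\<lambda>w. norm (w - z) / (\<epsilon> * \<rho>)) \<longlongrightarrow> 0) (at z)"
    by simp
  have "norm (\<bar>r w\<bar> / norm (w - z)) \<le> norm (w - z) / (\<epsilon> * \<rho>)" for w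
  proof (cases "w = z")
    case False
    then show ?thesis using r_bound[of w] by (simp add: divide_le_eq mult.commute)
  qed (use eps_pos rho_pos in simp)
  then have "((\<lambda>w. \<bar>r w\<bar> / norm (w - z)) \<longlongrightarrow> 0) (at z)"
    by (intro Lim_null_comparison[OF always_eventually lim] allI)
  then show ?thesis
    unfolding \<phi>_def[symmetric] has_derivative_iff_norm
    by (simp add: r_def bounded_linear_inner_right)
qed

lemma has_real_derivative_bregman_mirror:
  assumes "(z has_vector_derivative v) (at s within S)"
  shows "((\<lambda>s. bregman h xbar (C (z s)) ((1 / \<epsilon>) *\<^sub>R z s))
           has_real_derivative ((C (z s) - xbar) \<bullet> v / \<epsilon>)) (at s within S)"
proof -
  have dz: "(z has_derivative (\<lambda>r. r *\<^sub>R v)) (at s within S)"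
    using assms by (simp add: has_vector_derivative_def)
  have "((\<lambda>s. C (z s) \<bullet> z s - \<epsilon> * h (C (z s))) has_real_derivative C (z s) \<bullet> v) (at s within S)"
    unfolding has_field_derivative_def
    by (rule has_derivative_eq_rhs[OF has_derivative_compose[OF dz has_derivative_mirror_value]])
       (auto simp: inner_scaleR_right mult.commute)
  moreover have "((\<lambda>s. z s \<bullet> xbar) has_real_derivative v \<bullet> xbar) (at s within S)"
    unfolding has_field_derivative_def
    by (rule has_derivative_eq_rhs[OF bounded_linear.has_derivative[OF bounded_linear_inner_left dz]])
       (auto simp: inner_scaleR_left mult.commute)
  ultimately have "((\<lambda>s. h xbar + ((C (z s) \<bullet> z s - \<epsilon> * h (C (z s))) - z s \<bullet> xbar) / \<epsilon>)
      has_real_derivative (0 + (C (z s) \<bullet> v - v \<bullet> xbar) / \<epsilon>)) (at s within S)"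
    by (intro DERIV_add DERIV_const DERIV_cdivide DERIV_diff)
  moreover have "bregman h xbar (C w) ((1 / \<epsilon>) *\<^sub>R w) = h xbar + ((C w \<bullet> w - \<epsilon> * h (C w)) - w \<bullet> xbar) / \<epsilon>"
    for w
    using eps_pos by (simp add: bregman_def inner_diff_right inner_commute diff_divide_distrib)
  moreover have "0 + (C (z s) \<bullet> v - v \<bullet> xbar) / \<epsilon> = (C (z s) - xbar) \<bullet> v / \<epsilon>"
    by (simp only: inner_diff_left inner_commute[of xbar] add_0_left)
  ultimately show ?thesis by (simp only:)
qed

lemma bregman_dissipation:
  assumes hypo: "rel_hypo_monotone K h U \<mu>" and "\<mu> \<le> \<epsilon>" and fixpoint: "xbar = C (U xbar)"
  shows "(C w - xbar) \<bullet> (U (C w) - w) \<le> - (\<epsilon> - \<mu>) * bregman h xbar (C w) ((1 / \<epsilon>) *\<^sub>R w)"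
proof -
  define x where "x = C w"
  define B1 where "B1 = bregman h x xbar ((1 / \<epsilon>) *\<^sub>R U xbar)"
  define B2 where "B2 = bregman h xbar x ((1 / \<epsilon>) *\<^sub>R w)"
  have "(1 / \<epsilon>) *\<^sub>R U xbar \<in> subgrad K h xbar"
    using subgrad_mirror[of "U xbar"] fixpoint by simp
  then have monotone: "(U x - U xbar) \<bullet> (x - xbar) \<le> \<mu> * (B1 + B2)"
    using hypo subgrad_mirror[of w] unfolding rel_hypo_monotone_def B1_def B2_def x_def by blast
  have "0 \<le> \<rho> / 2 * (norm (x - xbar))\<^sup>2" using rho_pos by simp
  also have "\<dots> \<le> B1"
    using bregman_mirror_ge_sq_norm[OF mirror_in, of w "U xbar"] fixpoint by (simp add: B1_def x_def)
  finally have "B1 \<ge> 0" .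
  have "(x - xbar) \<bullet> (U xbar - w) = - \<epsilon> * (B1 + B2)"
    using eps_pos unfolding B1_def B2_def bregman_def
    by (simp add: inner_diff_left inner_diff_right inner_commute algebra_simps)
  moreover have "(x - xbar) \<bullet> (U x - w) = (U x - U xbar) \<bullet> (x - xbar) + (x - xbar) \<bullet> (U xbar - w)"
    by (simp add: inner_commute[of "U x - U xbar"] inner_add_right[symmetric])
  ultimately have "(x - xbar) \<bullet> (U x - w) \<le> (\<mu> - \<epsilon>) * B1 + (\<mu> - \<epsilon>) * B2"
    using monotone by (simp add: algebra_simps)
  also have "\<dots> \<le> (\<mu> - \<epsilon>) * B2"
    using \<open>B1 \<ge> 0\<close> \<open>\<mu> \<le> \<epsilon>\<close> by (simp add: mult_nonpos_nonneg)
  finally show ?thesis by (simp add: x_def B2_def)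
qed

lemma bregman_decay:
  assumes hypo: "rel_hypo_monotone K h U \<mu>" and "\<mu> < \<epsilon>" and fixpoint: "xbar = C (U xbar)"
    and "\<gamma> > 0"
    and ode: "\<And>t. t \<ge> 0 \<Longrightarrow>
      (z has_vector_derivative (\<gamma> *\<^sub>R (- z t + U (C (z t))))) (at t within {0..})"
    and "t \<ge> 0"
  shows "bregman h xbar (C (z t)) ((1 / \<epsilon>) *\<^sub>R z t)
    \<le> exp (- (\<gamma> * (\<epsilon> - \<mu>) / \<epsilon>) * t) * bregman h xbar (C (z 0)) ((1 / \<epsilon>) *\<^sub>R z 0)"
proof (rule exp_decay_if_deriv_le[OF has_real_derivative_bregman_mirror[OF ode] _ \<open>t \<ge> 0\<close>])
  fix s :: real
  have "(C (z s) - xbar) \<bullet> (\<gamma> *\<^sub>R (- z s + U (C (z s)))) / \<epsilon>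
      = \<gamma> / \<epsilon> * ((C (z s) - xbar) \<bullet> (U (C (z s)) - z s))"
    by (simp add: inner_scaleR_right)
  also have "\<dots> \<le> \<gamma> / \<epsilon> * (- (\<epsilon> - \<mu>) * bregman h xbar (C (z s)) ((1 / \<epsilon>) *\<^sub>R z s))"
    using bregman_dissipation[OF hypo _ fixpoint] \<open>\<mu> < \<epsilon>\<close> \<open>\<gamma> > 0\<close> eps_pos
    by (intro mult_left_mono) auto
  also have "\<dots> = - (\<gamma> * (\<epsilon> - \<mu>) / \<epsilon>) * bregman h xbar (C (z s)) ((1 / \<epsilon>) *\<^sub>R z s)"
    by (simp add: field_split_simps)
  finally show "(C (z s) - xbar) \<bullet> (\<gamma> *\<^sub>R (- z s + U (C (z s)))) / \<epsilon>
      \<le> - (\<gamma> * (\<epsilon> - \<mu>) / \<epsilon>) * bregman h xbar (C (z s)) ((1 / \<epsilon>) *\<^sub>R z s)" .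
qed auto

lemma sq_dist_decay:
  assumes hypo: "rel_hypo_monotone K h U \<mu>" and "\<mu> < \<epsilon>" and fixpoint: "xbar = C (U xbar)"
    and "\<gamma> > 0"
    and ode: "\<And>t. t \<ge> 0 \<Longrightarrow>
      (z has_vector_derivative (\<gamma> *\<^sub>R (- z t + U (C (z t))))) (at t within {0..})"
    and "t \<ge> 0"
  shows "(norm (xbar - C (z t)))\<^sup>2
    \<le> 2 / \<rho> * exp (- (\<gamma> * (\<epsilon> - \<mu>) / \<epsilon>) * t) * bregman h xbar (C (z 0)) ((1 / \<epsilon>) *\<^sub>R z 0)"
proof -
  have "xbar \<in> K" using fixpoint mirror_in by metis
  then have "(norm (xbar - C (z t)))\<^sup>2 \<le> 2 / \<rho> * bregman h xbar (C (z t)) ((1 / \<epsilon>) *\<^sub>R z t)"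
    using bregman_mirror_ge_sq_norm[of xbar "z t"] rho_pos by (simp add: field_simps)
  also have "\<dots> \<le> 2 / \<rho> * (exp (- (\<gamma> * (\<epsilon> - \<mu>) / \<epsilon>) * t) * bregman h xbar (C (z 0)) ((1 / \<epsilon>) *\<^sub>R z 0))"
    using bregman_decay[OF assms] rho_pos by (intro mult_left_mono) auto
  finally show ?thesis by (simp add: mult.assoc)
qed

end

lemma regularized_mirror_map_joint:
  fixes blk :: "'c::finite \<Rightarrow> 'p::finite"
  assumes "\<And>p. \<Omega>p p \<subseteq> block_space blk p" "\<And>p. \<Omega>p p \<noteq> {}" "\<And>p. compact (\<Omega>p p)"
    "\<And>p. convex (\<Omega>p p)" and reg: "\<And>p. regularizer (\<Omega>p p) (\<theta> p) \<rho>" and "\<rho> > 0" "\<epsilon> > 0"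
  shows "regularized_mirror_map (joint_set blk \<Omega>p) (hsum blk \<theta>) \<rho> \<epsilon> (mirror blk \<Omega>p \<theta> \<epsilon>)"
proof
  note mirror_p = mirror_p_maximizes[OF assms(3,4,2) reg \<open>\<rho> > 0\<close> \<open>\<epsilon> > 0\<close>]
  show "convex (joint_set blk \<Omega>p)" by (rule convex_joint_set) fact
  show "strongly_convex_on (joint_set blk \<Omega>p) (hsum blk \<theta>) \<rho>"
    using reg by (intro strongly_convex_on_hsum) (simp add: regularizer_iff)
  show "mirror blk \<Omega>p \<theta> \<epsilon> z \<in> joint_set blk \<Omega>p" for z
    using assms(1) mirror_p by (intro mirror_maximizes_hsum) auto
  show "y \<bullet> z - \<epsilon> * hsum blk \<theta> y
      \<le> mirror blk \<Omega>p \<theta> \<epsilon> z \<bullet> z - \<epsilon> * hsum blk \<theta> (mirror blk \<Omega>p \<theta> \<epsilon> z)"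
    if "y \<in> joint_set blk \<Omega>p" for y z
    using assms(1) mirror_p that by (intro mirror_maximizes_hsum) auto
qed fact+

lemma rel_hypo_monotone_zero_if_null_monotone:
  assumes "\<forall>x\<in>K. \<forall>x'\<in>K. (U x - U x') \<bullet> (x - x') = 0"
  shows "rel_hypo_monotone K h U 0"
  using assms unfolding rel_hypo_monotone_def subgrad_def by auto

theorem mainTheorem4:
  fixes blk :: "'c::finite \<Rightarrow> 'p::finite"
    and \<Omega>p :: "'p \<Rightarrow> (real^'c) set"
    and Upay :: "'p \<Rightarrow> real^'c \<Rightarrow> real"
    and U :: "real^'c \<Rightarrow> real^'c"
    and \<theta> :: "'p \<Rightarrow> real^'c \<Rightarrow> real"
    and L \<rho> \<epsilon> \<mu> \<gamma> :: real
    and xbar :: "real^'c"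
    and z :: "real \<Rightarrow> real^'c"
  assumes blk_surj: "surj blk"
    and game: "concave_game blk \<Omega>p Upay U L"
    and reg: "\<And>p. regularizer (\<Omega>p p) (\<theta> p) \<rho>"
    and rho_pos: "\<rho> > 0"
    and eps_pos: "\<epsilon> > 0"
    and hypo: "rel_hypo_monotone (joint_set blk \<Omega>p) (hsum blk \<theta>) U \<mu>"
    and xbar_int: "xbar \<in> rel_interior (joint_set blk \<Omega>p)"
    and xbar_ne: "xbar = mirror blk \<Omega>p \<theta> \<epsilon> (U xbar)"
    and xbar_unique: "\<And>y. y \<in> rel_interior (joint_set blk \<Omega>p) \<Longrightarrow>
                          y = mirror blk \<Omega>p \<theta> \<epsilon> (U y) \<Longrightarrow> y = xbar"
    and gamma_pos: "\<gamma> > 0"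
    and eps_mu: "\<epsilon> > \<mu>"
    and ode: "\<And>t. t \<ge> 0 \<Longrightarrow>
       (z has_vector_derivative (\<gamma> *\<^sub>R (- z t + U (mirror blk \<Omega>p \<theta> \<epsilon> (z t))))) (at t within {0..})"
  shows
    "((\<lambda>t. mirror blk \<Omega>p \<theta> \<epsilon> (z t)) \<longlongrightarrow> xbar) at_top
     \<and> (\<forall>t\<ge>0. bregman (hsum blk \<theta>) xbar (mirror blk \<Omega>p \<theta> \<epsilon> (z t)) ((1 / \<epsilon>) *\<^sub>R z t)
            \<le> exp (- \<gamma> * (\<epsilon> - \<mu>) / \<epsilon> * t)
              * bregman (hsum blk \<theta>) xbar (mirror blk \<Omega>p \<theta> \<epsilon> (z 0)) ((1 / \<epsilon>) *\<^sub>R z 0))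
     \<and> (\<forall>t\<ge>0. (norm (xbar - mirror blk \<Omega>p \<theta> \<epsilon> (z t)))\<^sup>2
            \<le> 2 / \<rho> * exp (- \<gamma> * (\<epsilon> - \<mu>) / \<epsilon> * t)
              * bregman (hsum blk \<theta>) xbar (mirror blk \<Omega>p \<theta> \<epsilon> (z 0)) ((1 / \<epsilon>) *\<^sub>R z 0))
     \<and> ((\<forall>x\<in>joint_set blk \<Omega>p. \<forall>x'\<in>joint_set blk \<Omega>p. (U x - U x') \<bullet> (x - x') = 0) \<longrightarrow>
        (\<forall>t\<ge>0. (norm (xbar - mirror blk \<Omega>p \<theta> \<epsilon> (z t)))\<^sup>2
            \<le> 2 / \<rho> * exp (- \<gamma> * t)
              * bregman (hsum blk \<theta>) xbar (mirror blk \<Omega>p \<theta> \<epsilon> (z 0)) ((1 / \<epsilon>) *\<^sub>R z 0)))"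
proof -
  have players: "\<Omega>p p \<subseteq> block_space blk p \<and> \<Omega>p p \<noteq> {} \<and> compact (\<Omega>p p) \<and> convex (\<Omega>p p)" for p
    using game unfolding concave_game_def by blast
  interpret regularized_mirror_map "joint_set blk \<Omega>p" "hsum blk \<theta>" \<rho> \<epsilon> "mirror blk \<Omega>p \<theta> \<epsilon>"
    using players reg rho_pos eps_pos by (intro regularized_mirror_map_joint) auto
  note decay = bregman_decay[OF _ _ xbar_ne gamma_pos ode]
  note dist = sq_dist_decay[OF _ _ xbar_ne gamma_pos ode]
  have "((\<lambda>t. mirror blk \<Omega>p \<theta> \<epsilon> (z t)) \<longlongrightarrow> xbar) at_top"
  proof (rule tendsto_if_sq_norm_le_exp_decay[where
        c = "2 / \<rho> * bregman (hsum blk \<theta>) xbar (mirror blk \<Omega>p \<theta> \<epsilon> (z 0)) ((1 / \<epsilon>) *\<^sub>R z 0)"])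
    show "\<gamma> * (\<epsilon> - \<mu>) / \<epsilon> > 0" using gamma_pos eps_mu eps_pos by simp
  qed (use dist[OF hypo eps_mu] in \<open>auto simp: norm_minus_commute mult_ac\<close>)
  moreover have "(\<forall>x\<in>joint_set blk \<Omega>p. \<forall>x'\<in>joint_set blk \<Omega>p. (U x - U x') \<bullet> (x - x') = 0) \<longrightarrow>
      (\<forall>t\<ge>0. (norm (xbar - mirror blk \<Omega>p \<theta> \<epsilon> (z t)))\<^sup>2
        \<le> 2 / \<rho> * exp (- \<gamma> * t) * bregman (hsum blk \<theta>) xbar (mirror blk \<Omega>p \<theta> \<epsilon> (z 0)) ((1 / \<epsilon>) *\<^sub>R z 0))"
    using dist[OF rel_hypo_monotone_zero_if_null_monotone eps_pos] eps_pos by auto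
  ultimately show ?thesis
    using decay[OF hypo eps_mu] dist[OF hypo eps_mu] by simp
qed

end
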